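(* For every $A\subseteq\Omega$, $$\mu^*(A) = \inf\Big\{c\in(0,1]: \liminf_{t\to\infty} cE_t\ge \mathbf{1}_A \text{ pointwise on }\Omega\Big\} = \inf\Big\{c\in(0,1]: \sup_{t\in\mathbb{N}_0} cE_t\ge \mathbf{1}_A\text{ pointwise on }\Omega\Big\},$$ where in each infimum $c$ ranges over $(0,1]$ and $(E_t)_{t\in\mathbb{N}_0}$ ranges over all $\mathcal{P}$-e-processes (i.e. the infimum is over all $c$ for which some $\mathcal{P}$-e-process satisfies the displayed inequality).
   Context: Standing setup: $(\Omega, (\mathcal{F}_t)_{t\in\mathbb{N}_0}, \mathcal{F})$ is a filtered measurable space with $\mathcal{F} = \sigma\big(\bigcup_{t} \mathcal{F}_t\big)$. A stopping time is a map $\tau:\Omega\to\mathbb{N}_0\cup\{\infty\}$ with $\{\tau \le t\}\in\mathcal{F}_t$ for all $t$; $\mathcal{T}$ denotes the set of all stopping times. $\mathcal{P}$ is an arbitrary family of probability measures on $\mathcal{F}$. The inverse-capital measure is defined for every $A\subseteq\Omega$ by $\mu^*(A) = \inf_{\tau\in\mathcal{T}:\, A\subseteq\{\tau<\infty\}} \sup_{\mathbb{P}\in\mathcal{P}} \mathbb{P}(\tau<\infty)$. A $\mathcal{P}$-e-process is a nonnegative (possibly $[0,\infty]$-valued) process $(E_t)_{t\in\mathbb{N}_0}$ adapted to $(\mathcal{F}_t)$ such that $\mathbb{E}_{\mathbb{P}}[E_\tau]\le 1$ for every $\mathbb{P}\in\mathcal{P}$ and every $\tau\in\mathcal{T}$,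 with the convention $E_\infty=\limsup_{t\to\infty}E_t$. *)

theory Defs
  imports "HOL-Probability.Probability"
begin

definition filtered_space :: "'a set \<Rightarrow> (nat \<Rightarrow> 'a set set) \<Rightarrow> bool" where
  "filtered_space \<Omega> F \<longleftrightarrow> (\<forall>t. sigma_algebra \<Omega> (F t)) \<and> (\<forall>s t. s \<le> t \<longrightarrow> F s \<subseteq> F t)"

definition F_infty :: "'a set \<Rightarrow> (nat \<Rightarrow> 'a set set) \<Rightarrow> 'a set set" where
  "F_infty \<Omega> F = sigma_sets \<Omega> (\<Union>t. F t)"

definition prob_family :: "'a set \<Rightarrow> (nat \<Rightarrow> 'a set set) \<Rightarrow> 'a measure set \<Rightarrow> bool" where
  "prob_family \<Omega> F Ps \<longleftrightarrow>
     (\<forall>P\<in>Ps. prob_space P \<and> space P = \<Omega> \<and> sets P = F_infty \<Omega> F)"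

definition stopping_time_on :: "'a set \<Rightarrow> (nat \<Rightarrow> 'a set set) \<Rightarrow> ('a \<Rightarrow> enat) \<Rightarrow> bool" where
  "stopping_time_on \<Omega> F \<tau> \<longleftrightarrow> (\<forall>t::nat. {\<omega>\<in>\<Omega>. \<tau> \<omega> \<le> enat t} \<in> F t)"

definition inv_capital :: "'a set \<Rightarrow> (nat \<Rightarrow> 'a set set) \<Rightarrow> 'a measure set \<Rightarrow> 'a set \<Rightarrow> ennreal" where
  "inv_capital \<Omega> F Ps A =
     (INF \<tau>\<in>{\<tau>. stopping_time_on \<Omega> F \<tau> \<and> A \<subseteq> {\<omega>\<in>\<Omega>. \<tau> \<omega> < \<infinity>}}.
        SUP P\<in>Ps. emeasure P {\<omega>\<in>\<Omega>. \<tau> \<omega> < \<infinity>})"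

definition stopped_value :: "(nat \<Rightarrow> 'a \<Rightarrow> ennreal) \<Rightarrow> ('a \<Rightarrow> enat) \<Rightarrow> 'a \<Rightarrow> ennreal" where
  "stopped_value E \<tau> \<omega> =
     (case \<tau> \<omega> of enat n \<Rightarrow> E n \<omega> | \<infinity> \<Rightarrow> limsup (\<lambda>t. E t \<omega>))"

definition e_process :: "'a set \<Rightarrow> (nat \<Rightarrow> 'a set set) \<Rightarrow> 'a measure set \<Rightarrow> (nat \<Rightarrow> 'a \<Rightarrow> ennreal) \<Rightarrow> bool" where
  "e_process \<Omega> F Ps E \<longleftrightarrow>
     (\<forall>t. E t \<in> borel_measurable (sigma \<Omega> (F t))) \<and>
     (\<forall>P\<in>Ps. \<forall>\<tau>. stopping_time_on \<Omega> F \<tau> \<longrightarrow> (\<integral>\<^sup>+ \<omega>. stopped_value E \<tau> \<omega> \<partial>P) \<le> 1)"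

end

theory Submission
  imports Defs
begin

text \<open>
  If a stopping time \<tau> covers A, the process (1/c) \<one>{\<tau> \<le> t} with c \<ge> sup_P P(\<tau> < \<infinity>)
  is an e-process whose scaled paths c E_t eventually equal 1 on A; so \<mu>*(A) dominates the
  liminf-infimum. Conversely, if sup_t c E_t \<ge> \<one>_A, the first time c E_t reaches r < 1 is a
  stopping time covering A, and stopping E at that time (Ville's inequality) gives
  r P(\<tau> < \<infinity>) \<le> c for every P; letting r \<rightarrow> 1 shows \<mu>*(A) \<le> c. Since
  liminf \<le> sup, the sup-infimum is at most the liminf-infimum, which closes the cycle.
\<close>

lemma sets_sigma_filtration: "filtered_space \<Omega> F \<Longrightarrow> sets (sigma \<Omega> (F t)) = F t"
  unfolding filtered_space_def by (simp add: sigma_algebra.sets_measure_of_eq)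

lemma space_sigma_filtration: "filtered_space \<Omega> F \<Longrightarrow> space (sigma \<Omega> (F t)) = \<Omega>"
  unfolding filtered_space_def by (simp add: sigma_algebra.space_measure_of_eq)

lemma filtration_subset_sets: "prob_family \<Omega> F Ps \<Longrightarrow> P \<in> Ps \<Longrightarrow> F t \<subseteq> sets P"
  unfolding prob_family_def F_infty_def by (auto intro: sigma_sets.Basic)

lemma space_prob_family: "prob_family \<Omega> F Ps \<Longrightarrow> P \<in> Ps \<Longrightarrow> space P = \<Omega>"
  unfolding prob_family_def by auto

lemma adapted_level_set:
  fixes X :: "'a \<Rightarrow> ennreal"
  assumes "filtered_space \<Omega> F" and [measurable]: "X \<in> borel_measurable (sigma \<Omega> (F t))"
  shows "{\<omega>\<in>\<Omega>. r \<le> c * X \<omega>} \<in> F t"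
proof -
  have "{\<omega>\<in>space (sigma \<Omega> (F t)). r \<le> c * X \<omega>} \<in> sets (sigma \<Omega> (F t))"
    by measurable
  then show ?thesis
    using assms(1) by (simp add: sets_sigma_filtration space_sigma_filtration)
qed

lemma stopping_time_finite_set_measurable:
  assumes "prob_family \<Omega> F Ps" and "P \<in> Ps" and "stopping_time_on \<Omega> F \<tau>"
  shows "{\<omega>\<in>\<Omega>. \<tau> \<omega> < \<infinity>} \<in> sets P"
proof -
  have "x < \<infinity> \<longleftrightarrow> (\<exists>n. x \<le> enat n)" for x :: enat
    by (cases x) auto
  then have "{\<omega>\<in>\<Omega>. \<tau> \<omega> < \<infinity>} = (\<Union>n. {\<omega>\<in>\<Omega>. \<tau> \<omega> \<le> enat n})"
    by auto
  also have "\<dots> \<in> sets P"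
    using assms filtration_subset_sets unfolding stopping_time_on_def
    by (intro sets.countable_UN) blast
  finally show ?thesis .
qed

definition hitting_time :: "(nat \<Rightarrow> 'a \<Rightarrow> bool) \<Rightarrow> 'a \<Rightarrow> enat" where
  "hitting_time Q \<omega> = (if \<exists>t. Q t \<omega> then enat (LEAST t. Q t \<omega>) else \<infinity>)"

lemma hitting_time_less_infinity_iff: "hitting_time Q \<omega> < \<infinity> \<longleftrightarrow> (\<exists>t. Q t \<omega>)"
  by (simp add: hitting_time_def)

lemma hitting_time_le_iff: "hitting_time Q \<omega> \<le> enat t \<longleftrightarrow> (\<exists>s\<le>t. Q s \<omega>)"
  unfolding hitting_time_def by (auto intro: Least_le[THEN order.trans] LeastI)

lemma hitting_time_hits: "hitting_time Q \<omega> = enat n \<Longrightarrow> Q n \<omega>"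
  unfolding hitting_time_def by (auto split: if_splits intro: LeastI)

lemma stopping_time_hitting_time:
  assumes "filtered_space \<Omega> F" and adapted: "\<And>t. {\<omega>\<in>\<Omega>. Q t \<omega>} \<in> F t"
  shows "stopping_time_on \<Omega> F (hitting_time Q)"
  unfolding stopping_time_on_def
proof
  fix t
  interpret sigma_algebra \<Omega> "F t"
    using assms(1) by (simp add: filtered_space_def)
  have "{\<omega>\<in>\<Omega>. hitting_time Q \<omega> \<le> enat t} = (\<Union>s\<in>{..t}. {\<omega>\<in>\<Omega>. Q s \<omega>})"
    by (auto simp: hitting_time_le_iff)
  also have "\<dots> \<in> F t"
    using assms(1) adapted unfolding filtered_space_def by (intro finite_UN) blast+
  finally show "{\<omega>\<in>\<Omega>. hitting_time Q \<omega> \<le> enat t} \<in> F t" .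
qed

lemma stopping_time_measurable:
  assumes pf: "prob_family \<Omega> F Ps" and P: "P \<in> Ps" and st: "stopping_time_on \<Omega> F \<tau>"
  shows "\<tau> \<in> P \<rightarrow>\<^sub>M count_space UNIV"
proof (rule measurable_count_space_eq_countable[THEN iffD2], simp, intro conjI ballI)
  have le_sets: "{\<omega>\<in>\<Omega>. \<tau> \<omega> \<le> i} \<in> sets P" for i
  proof (cases i)
    case (enat n)
    then show ?thesis
      using st filtration_subset_sets[OF pf P] unfolding stopping_time_on_def by auto
  next
    case infinity
    then show ?thesis
      using sets.top[of P] space_prob_family[OF pf P] by simp
  qed
  fix i
  have hit_iff: "x = i \<longleftrightarrow> x \<le> i \<and> \<not> (\<exists>m. enat m < i \<and> x \<le> enat m)" for x
    by (cases x) (auto simp: order.order_iff_strict)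
  have "\<tau> -` {i} \<inter> space P = {\<omega>\<in>\<Omega>. \<tau> \<omega> \<le> i} - (\<Union>m\<in>{m. enat m < i}. {\<omega>\<in>\<Omega>. \<tau> \<omega> \<le> enat m})"
    using space_prob_family[OF pf P] hit_iff by blast
  also have "\<dots> \<in> sets P"
    using le_sets by (intro sets.Diff sets.countable_UN') auto
  finally show "\<tau> -` {i} \<inter> space P \<in> sets P" .
qed simp_all

lemma measurable_stopped_value:
  assumes "prob_family \<Omega> F Ps" and "P \<in> Ps" and "stopping_time_on \<Omega> F \<tau>"
    and [measurable]: "\<And>t. E t \<in> borel_measurable P"
  shows "stopped_value E \<tau> \<in> borel_measurable P"
  unfolding stopped_value_def
proof (rule measurable_compose_countable[where f = "\<lambda>i \<omega>. case i of enat n \<Rightarrow> E n \<omega> | \<infinity> \<Rightarrow> limsup (\<lambda>t. E t \<omega>)"])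
  show "(\<lambda>\<omega>. case i of enat n \<Rightarrow> E n \<omega> | \<infinity> \<Rightarrow> limsup (\<lambda>t. E t \<omega>)) \<in> borel_measurable P" for i
    by (cases i) simp_all
  show "\<tau> \<in> P \<rightarrow>\<^sub>M count_space UNIV"
    using assms(1-3) by (rule stopping_time_measurable)
qed

lemma e_process_measurable:
  assumes "filtered_space \<Omega> F" and "prob_family \<Omega> F Ps" and "P \<in> Ps"
    and "e_process \<Omega> F Ps E"
  shows "E t \<in> borel_measurable P"
proof -
  have "sigma \<Omega> (F t) \<rightarrow>\<^sub>M (borel :: ennreal measure) \<subseteq> P \<rightarrow>\<^sub>M borel"
    using assms(1-3)
    by (intro measurable_mono)
       (simp_all add: sets_sigma_filtration space_sigma_filtration filtration_subset_sets space_prob_family)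
  then show ?thesis
    using assms(4) unfolding e_process_def by blast
qed

lemma ville_inequality:
  fixes E :: "nat \<Rightarrow> 'a \<Rightarrow> ennreal"
  assumes fs: "filtered_space \<Omega> F" and pf: "prob_family \<Omega> F Ps" and P: "P \<in> Ps"
    and ep: "e_process \<Omega> F Ps E"
  shows "r * emeasure P {\<omega>\<in>\<Omega>. \<exists>t. r \<le> c * E t \<omega>} \<le> c"
proof -
  define \<tau> where "\<tau> = hitting_time (\<lambda>t \<omega>. r \<le> c * E t \<omega>)"
  have st: "stopping_time_on \<Omega> F \<tau>"
    unfolding \<tau>_def using fs ep
    by (intro stopping_time_hitting_time adapted_level_set) (auto simp: e_process_def)
  have hit_set: "{\<omega>\<in>\<Omega>. \<exists>t. r \<le> c * E t \<omega>} = {\<omega>\<in>\<Omega>. \<tau> \<omega> < \<infinity>}"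
    unfolding \<tau>_def hitting_time_less_infinity_iff ..
  have hit_bound: "r * indicator {\<omega>\<in>\<Omega>. \<tau> \<omega> < \<infinity>} \<omega> \<le> c * stopped_value E \<tau> \<omega>" for \<omega>
  proof (cases "\<tau> \<omega>")
    case (enat n)
    then have "r \<le> c * E n \<omega>"
      unfolding \<tau>_def by (rule hitting_time_hits)
    with enat show ?thesis
      by (simp add: stopped_value_def indicator_def)
  qed simp
  have "r * emeasure P {\<omega>\<in>\<Omega>. \<exists>t. r \<le> c * E t \<omega>} = (\<integral>\<^sup>+\<omega>. r * indicator {\<omega>\<in>\<Omega>. \<tau> \<omega> < \<infinity>} \<omega> \<partial>P)"
    unfolding hit_set
    by (rule nn_integral_cmult_indicator[symmetric], rule stopping_time_finite_set_measurable[OF pf P st])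
  also have "\<dots> \<le> (\<integral>\<^sup>+\<omega>. c * stopped_value E \<tau> \<omega> \<partial>P)"
    by (intro nn_integral_mono hit_bound)
  also have "\<dots> = c * (\<integral>\<^sup>+\<omega>. stopped_value E \<tau> \<omega> \<partial>P)"
    using pf P st e_process_measurable[OF fs pf P ep]
    by (intro nn_integral_cmult measurable_stopped_value)
  also have "\<dots> \<le> c"
    using ep P st unfolding e_process_def by (metis mult.right_neutral mult_left_mono zero_le)
  finally show ?thesis .
qed

lemma inv_capital_le_hitting_probability:
  assumes "filtered_space \<Omega> F" and "\<And>t. {\<omega>\<in>\<Omega>. Q t \<omega>} \<in> F t"
    and "A \<subseteq> {\<omega>\<in>\<Omega>. \<exists>t. Q t \<omega>}"
  shows "inv_capital \<Omega> F Ps A \<le> (SUP P\<in>Ps. emeasure P {\<omega>\<in>\<Omega>. \<exists>t. Q t \<omega>})"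
proof -
  have hit_set: "{\<omega>\<in>\<Omega>. hitting_time Q \<omega> < \<infinity>} = {\<omega>\<in>\<Omega>. \<exists>t. Q t \<omega>}"
    unfolding hitting_time_less_infinity_iff ..
  have "hitting_time Q \<in> {\<tau>. stopping_time_on \<Omega> F \<tau> \<and> A \<subseteq> {\<omega>\<in>\<Omega>. \<tau> \<omega> < \<infinity>}}"
    unfolding mem_Collect_eq hit_set using assms stopping_time_hitting_time by blast
  then show ?thesis
    unfolding inv_capital_def by (rule INF_lower2) (simp only: hit_set order.refl)
qed

lemma inv_capital_le_of_sup_cover:
  fixes E :: "nat \<Rightarrow> 'a \<Rightarrow> ennreal"
  assumes fs: "filtered_space \<Omega> F" and pf: "prob_family \<Omega> F Ps"
    and ep: "e_process \<Omega> F Ps E" and "A \<subseteq> \<Omega>"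
    and cover: "\<forall>\<omega>\<in>\<Omega>. indicator A \<omega> \<le> (SUP t. c * E t \<omega>)"
  shows "inv_capital \<Omega> F Ps A \<le> c"
proof -
  have "r * inv_capital \<Omega> F Ps A \<le> c" if "r < 1" for r
  proof -
    have "A \<subseteq> {\<omega>\<in>\<Omega>. \<exists>t. r \<le> c * E t \<omega>}"
    proof
      fix \<omega> assume "\<omega> \<in> A"
      with \<open>A \<subseteq> \<Omega>\<close> cover have "\<omega> \<in> \<Omega>" "1 \<le> (SUP t. c * E t \<omega>)"
        by force+
      with \<open>r < 1\<close> have "r < (SUP t. c * E t \<omega>)"
        using order.strict_trans2 by blast
      with \<open>\<omega> \<in> \<Omega>\<close> show "\<omega> \<in> {\<omega>\<in>\<Omega>. \<exists>t. r \<le> c * E t \<omega>}"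
        by (auto simp: less_SUP_iff intro: less_imp_le)
    qed
    then have "inv_capital \<Omega> F Ps A \<le> (SUP P\<in>Ps. emeasure P {\<omega>\<in>\<Omega>. \<exists>t. r \<le> c * E t \<omega>})"
      using fs ep by (intro inv_capital_le_hitting_probability adapted_level_set) (auto simp: e_process_def)
    then have "r * inv_capital \<Omega> F Ps A \<le> (SUP P\<in>Ps. r * emeasure P {\<omega>\<in>\<Omega>. \<exists>t. r \<le> c * E t \<omega>})"
      by (simp add: SUP_mult_left_ennreal[symmetric] mult_left_mono)
    also have "\<dots> \<le> c"
      using fs pf ep by (intro SUP_least ville_inequality)
    finally show ?thesis .
  qed
  then have "(SUP r\<in>{..<1}. r * inv_capital \<Omega> F Ps A) \<le> c"
    by (intro SUP_least) simp
  then show ?thesis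
    by (simp add: SUP_mult_right_ennreal[symmetric] Sup_lessThan)
qed

lemma e_process_scaled_stopping_indicator:
  fixes d :: ennreal
  assumes fs: "filtered_space \<Omega> F" and pf: "prob_family \<Omega> F Ps"
    and st: "stopping_time_on \<Omega> F \<tau>"
    and bound: "\<And>P. P \<in> Ps \<Longrightarrow> d * emeasure P {\<omega>\<in>\<Omega>. \<tau> \<omega> < \<infinity>} \<le> 1"
  shows "e_process \<Omega> F Ps (\<lambda>t. \<lambda>\<omega>. d * indicator {\<omega>\<in>\<Omega>. \<tau> \<omega> \<le> enat t} \<omega>)"
    (is "e_process \<Omega> F Ps ?E")
  unfolding e_process_def
proof (intro conjI allI ballI impI)
  fix t
  have [measurable]: "{\<omega>\<in>\<Omega>. \<tau> \<omega> \<le> enat t} \<in> sets (sigma \<Omega> (F t))"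
    using st fs by (simp add: stopping_time_on_def sets_sigma_filtration)
  show "?E t \<in> borel_measurable (sigma \<Omega> (F t))"
    by measurable
next
  fix P \<sigma> assume P: "P \<in> Ps" and "stopping_time_on \<Omega> F \<sigma>"
  define S where "S = {\<omega>\<in>\<Omega>. \<tau> \<omega> < \<infinity>}"
  have E_le: "?E t \<omega> \<le> d * indicator S \<omega>" for t \<omega>
    by (cases "\<tau> \<omega>") (auto simp: S_def indicator_def)
  have "stopped_value ?E \<sigma> \<omega> \<le> d * indicator S \<omega>" for \<omega>
    by (cases "\<sigma> \<omega>") (simp_all add: stopped_value_def E_le Limsup_bounded)
  then have "(\<integral>\<^sup>+\<omega>. stopped_value ?E \<sigma> \<omega> \<partial>P) \<le> (\<integral>\<^sup>+\<omega>. d * indicator S \<omega> \<partial>P)"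
    by (intro nn_integral_mono)
  also have "\<dots> = d * emeasure P S"
    unfolding S_def using pf P st by (intro nn_integral_cmult_indicator stopping_time_finite_set_measurable)
  also have "\<dots> \<le> 1"
    unfolding S_def using P by (rule bound)
  finally show "(\<integral>\<^sup>+\<omega>. stopped_value ?E \<sigma> \<omega> \<partial>P) \<le> 1" .
qed

lemma liminf_cover_of_stopping_time:
  fixes c :: ennreal
  assumes fs: "filtered_space \<Omega> F" and pf: "prob_family \<Omega> F Ps"
    and st: "stopping_time_on \<Omega> F \<tau>" and cover: "A \<subseteq> {\<omega>\<in>\<Omega>. \<tau> \<omega> < \<infinity>}"
    and "c \<noteq> 0" and "c \<noteq> \<top>" and bound: "\<And>P. P \<in> Ps \<Longrightarrow> emeasure P {\<omega>\<in>\<Omega>. \<tau> \<omega> < \<infinity>} \<le> c"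
  shows "\<exists>E. e_process \<Omega> F Ps E \<and> (\<forall>\<omega>\<in>\<Omega>. indicator A \<omega> \<le> liminf (\<lambda>t. c * E t \<omega>))"
proof (intro exI conjI ballI)
  define E where "E t \<omega> = 1 / c * indicator {\<omega>\<in>\<Omega>. \<tau> \<omega> \<le> enat t} \<omega>" for t \<omega>
  have c_inverse: "c * (1 / c) = 1"
    using \<open>c \<noteq> 0\<close> \<open>c \<noteq> \<top>\<close> by (metis divide_eq_1_ennreal ennreal_divide_times mult.comm_neutral)
  have "1 / c * emeasure P {\<omega>\<in>\<Omega>. \<tau> \<omega> < \<infinity>} \<le> 1" if "P \<in> Ps" for P
    using mult_left_mono[OF bound[OF that], of "1 / c"] c_inverse by (simp add: mult.commute)
  then show "e_process \<Omega> F Ps E"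
    unfolding E_def by (rule e_process_scaled_stopping_indicator[OF fs pf st])
  fix \<omega> assume "\<omega> \<in> \<Omega>"
  show "indicator A \<omega> \<le> liminf (\<lambda>t. c * E t \<omega>)"
  proof (cases "\<omega> \<in> A")
    case True
    with cover obtain n where "\<tau> \<omega> = enat n"
      by (cases "\<tau> \<omega>") auto
    then have "\<forall>\<^sub>F t in sequentially. 1 \<le> c * E t \<omega>"
      using \<open>\<omega> \<in> \<Omega>\<close> c_inverse by (auto simp: E_def eventually_sequentially intro: exI[of _ n])
    with True show ?thesis
      by (simp add: Liminf_bounded)
  qed simp
qed

lemma liminf_le_SUP: "liminf f \<le> (SUP t. f t :: 'b :: complete_linorder)"
  unfolding liminf_SUP_INF by (intro SUP_mono) (auto intro: INF_lower2)

lemma Inf_liminf_cover_le_inv_capital: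
  assumes fs: "filtered_space \<Omega> F" and pf: "prob_family \<Omega> F Ps"
  shows "Inf {c :: ennreal. 0 < c \<and> c \<le> 1 \<and>
            (\<exists>E. e_process \<Omega> F Ps E \<and> (\<forall>\<omega>\<in>\<Omega>. indicator A \<omega> \<le> liminf (\<lambda>t. c * E t \<omega>)))}
         \<le> inv_capital \<Omega> F Ps A"
    (is "Inf ?S \<le> _")
  unfolding inv_capital_def
proof (rule INF_greatest, clarify)
  fix \<tau> assume st: "stopping_time_on \<Omega> F \<tau>" and cover: "A \<subseteq> {\<omega>\<in>\<Omega>. \<tau> \<omega> < \<infinity>}"
  define s where "s = (SUP P\<in>Ps. emeasure P {\<omega>\<in>\<Omega>. \<tau> \<omega> < \<infinity>})"
  have "s \<le> 1"
    using pf unfolding s_def prob_family_def by (auto intro!: SUP_least prob_space.emeasure_le_1)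
  show "Inf ?S \<le> s"
  proof (rule dense_ge)
    fix x assume "s < x"
    define c where "c = min x 1"
    have "0 < c" "c \<le> 1" "s \<le> c"
      using \<open>s < x\<close> \<open>s \<le> 1\<close> by (auto simp: c_def intro: order.strict_trans1[OF zero_le])
    moreover have "emeasure P {\<omega>\<in>\<Omega>. \<tau> \<omega> < \<infinity>} \<le> c" if "P \<in> Ps" for P
      using that \<open>s \<le> c\<close> unfolding s_def by (meson SUP_upper order.trans)
    moreover have "c \<noteq> \<top>"
      using \<open>c \<le> 1\<close> ennreal_one_less_top by (metis leD)
    ultimately have "c \<in> ?S"
      using liminf_cover_of_stopping_time[OF fs pf st cover, of c] by auto
    then show "Inf ?S \<le> x"
      by (rule Inf_lower2) (simp add: c_def)
  qed
qed

theorem mainTheorem5: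
  fixes \<Omega> :: "'a set" and F :: "nat \<Rightarrow> 'a set set" and Ps :: "'a measure set" and A :: "'a set"
  assumes "filtered_space \<Omega> F"
    and "prob_family \<Omega> F Ps"
    and "A \<subseteq> \<Omega>"
  shows "inv_capital \<Omega> F Ps A =
           Inf {c :: ennreal. 0 < c \<and> c \<le> 1 \<and>
              (\<exists>E. e_process \<Omega> F Ps E \<and>
                   (\<forall>\<omega>\<in>\<Omega>. indicator A \<omega> \<le> liminf (\<lambda>t. c * E t \<omega>)))}
       \<and> inv_capital \<Omega> F Ps A =
           Inf {c :: ennreal. 0 < c \<and> c \<le> 1 \<and>
              (\<exists>E. e_process \<Omega> F Ps E \<and>
                   (\<forall>\<omega>\<in>\<Omega>. indicator A \<omega> \<le> (SUP t. c * E t \<omega>)))}"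
    (is "?m = Inf ?S_liminf \<and> ?m = Inf ?S_sup")
proof -
  have "?S_liminf \<subseteq> ?S_sup"
    by (blast intro: order.trans[OF _ liminf_le_SUP])
  then have liminf_sup: "Inf ?S_sup \<le> Inf ?S_liminf"
    by (rule Inf_superset_mono)
  have upper: "?m \<le> Inf ?S_sup"
    using inv_capital_le_of_sup_cover[OF assms(1,2) _ assms(3)] by (auto intro: Inf_greatest)
  have lower: "Inf ?S_liminf \<le> ?m"
    using assms(1,2) by (rule Inf_liminf_cover_le_inv_capital)
  show ?thesis
    using order.trans[OF upper liminf_sup] order.trans[OF liminf_sup lower] upper lower
    by (blast intro: order.antisym)
qed

end
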